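(* Let $N$ be a natural number, $P=\{a\subseteq N: |a|\geq 2\}$, and let $\|\cdot\|_3$ be the graph coloring norm on subsets of $P$ (defined in the context). If $A\subseteq P$ and $\|A\|_3=k$, then \[|A|\leq 2^N-2^k\,2^{N/2^k}+2^k-1.\]
   Context: $N=\{0,\ldots,N-1\}$. For $A\subseteq P$ and $z\subseteq N$ let $A\restriction z=\{a\in A: a\subseteq z\}$. The relation "$\|A\|_3\geq m$" is defined recursively: $\|A\|_3\geq 0$ always; $\|A\|_3\geq 1$ iff $A\neq\emptyset$; for $m\geq 1$, $\|A\|_3\geq m+1$ iff for every $z\subseteq N$ either $\|A\restriction z\|_3\geq m$ or $\|A\restriction(N\setminus z)\|_3\geq m$. Then $\|A\|_3$ is the largest $m$ with $\|A\|_3\geq m$. *)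

theory Defs
  imports Complex_Main
begin

text \<open>The ground set N = {0,...,N-1} is rendered as {..<N}.\<close>

definition restr :: "nat set set \<Rightarrow> nat set \<Rightarrow> nat set set" where
  "restr A z = {a \<in> A. a \<subseteq> z}"

fun norm3_ge :: "nat \<Rightarrow> nat set set \<Rightarrow> nat \<Rightarrow> bool" where
  "norm3_ge N A 0 = True"
| "norm3_ge N A (Suc 0) = (A \<noteq> {})"
| "norm3_ge N A (Suc (Suc m)) =
     (\<forall>z. z \<subseteq> {..<N} \<longrightarrow>
        norm3_ge N (restr A z) (Suc m) \<or> norm3_ge N (restr A ({..<N} - z)) (Suc m))"

definition norm3 :: "nat \<Rightarrow> nat set set \<Rightarrow> nat" where
  "norm3 N A = (GREATEST m. norm3_ge N A m)"

end

theory Submission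
  imports Defs
begin

text \<open>\<open>\<parallel>A\<parallel>\<^sub>3 \<le> k\<close> holds exactly when the ground set has a coloring with \<open>2\<^sup>k\<close> colors under
  which no member of \<open>A\<close> is monochromatic: each level of the recursive definition halves the
  palette along the split \<open>z\<close>, \<open>N - z\<close>. Giving every point its own color shows
  \<open>\<parallel>A\<parallel>\<^sub>3 \<le> N\<close>, since members of \<open>A\<close> have two points. For such a coloring, no set inside
  a single color class belongs to \<open>A\<close>; with class sizes \<open>n\<^sub>i\<close> there are
  \<open>1 - 2\<^sup>k + \<Sum> 2\<^bsup>n\<^sub>i\<^esup>\<close> such sets, and by convexity of \<open>t \<mapsto> 2\<^sup>t\<close> this is at least
  \<open>1 - 2\<^sup>k + 2\<^sup>k 2\<^bsup>N/2\<^sup>k\<^esup>\<close>.\<close>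

lemma norm3_ge_Suc_nonempty: "norm3_ge N A (Suc m) \<Longrightarrow> A \<noteq> {}"
proof (induction m arbitrary: A)
  case 0
  then show ?case by simp
next
  case (Suc m)
  have "norm3_ge N (restr A {}) (Suc m) \<or> norm3_ge N (restr A ({..<N} - {})) (Suc m)"
    using Suc.prems by (simp only: norm3_ge.simps) blast
  then show ?case
    using Suc.IH by (auto simp: restr_def)
qed

lemma norm3_ge_SucD: "norm3_ge N A (Suc m) \<Longrightarrow> norm3_ge N A m"
proof (induction N A m rule: norm3_ge.induct)
  case (2 N A)
  then have "A \<noteq> {}" by (rule norm3_ge_Suc_nonempty)
  then show ?case by simp
next
  case (3 N A m)
  have "\<forall>z. z \<subseteq> {..<N} \<longrightarrow>
      norm3_ge N (restr A z) (Suc (Suc m)) \<or> norm3_ge N (restr A ({..<N} - z)) (Suc (Suc m))"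
    using "3.prems" by (simp only: norm3_ge.simps)
  then have "\<forall>z. z \<subseteq> {..<N} \<longrightarrow>
      norm3_ge N (restr A z) (Suc m) \<or> norm3_ge N (restr A ({..<N} - z)) (Suc m)"
    using "3.IH" by blast
  then show ?case
    by (simp only: norm3_ge.simps)
qed simp

lemma norm3_ge_mono:
  assumes "norm3_ge N A m" and "n \<le> m"
  shows "norm3_ge N A n"
  using assms(2,1) by (induction rule: inc_induct) (auto intro: norm3_ge_SucD)

definition proper_coloring :: "nat \<Rightarrow> (nat \<Rightarrow> nat) \<Rightarrow> nat set set \<Rightarrow> bool" where
  "proper_coloring K f A \<longleftrightarrow> (\<forall>x. f x < K) \<and> (\<forall>a\<in>A. \<exists>x\<in>a. \<exists>y\<in>a. f x \<noteq> f y)"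

lemma proper_coloring_restr_low:
  assumes "proper_coloring (2 * K) f A" and "z \<subseteq> {x. f x < K}"
  shows "proper_coloring K (\<lambda>x. if f x < K then f x else 0) (restr A z)"
  unfolding proper_coloring_def
proof (intro conjI allI ballI)
  fix a assume "a \<in> restr A z"
  then have "a \<in> A" and "a \<subseteq> z" by (auto simp: restr_def)
  then obtain x y where "x \<in> a" "y \<in> a" "f x \<noteq> f y"
    using assms(1) by (auto simp: proper_coloring_def)
  then show "\<exists>x\<in>a. \<exists>y\<in>a. (if f x < K then f x else 0) \<noteq> (if f y < K then f y else 0)"
    using \<open>a \<subseteq> z\<close> assms(2) by auto
next
  fix x
  have "f x < 2 * K" using assms(1) by (simp add: proper_coloring_def)
  then show "(if f x < K then f x else 0) < K" by simp
qed

lemma proper_coloring_restr_high: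
  assumes "proper_coloring (2 * K) f A" and "z \<subseteq> {x. K \<le> f x}"
  shows "proper_coloring K (\<lambda>x. f x - K) (restr A z)"
  unfolding proper_coloring_def
proof (intro conjI allI ballI)
  fix x
  have "f x < 2 * K" using assms(1) by (simp add: proper_coloring_def)
  then show "f x - K < K" by simp
next
  fix a assume "a \<in> restr A z"
  then have "a \<in> A" and "a \<subseteq> z" by (auto simp: restr_def)
  then obtain x y where "x \<in> a" "y \<in> a" "f x \<noteq> f y"
    using assms(1) by (auto simp: proper_coloring_def)
  moreover have "K \<le> f x" and "K \<le> f y"
    using \<open>x \<in> a\<close> \<open>y \<in> a\<close> \<open>a \<subseteq> z\<close> assms(2) by auto
  ultimately show "\<exists>x\<in>a. \<exists>y\<in>a. f x - K \<noteq> f y - K"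
    by (metis le_add_diff_inverse)
qed

lemma proper_coloring_join:
  assumes f: "proper_coloring K f (restr A z)" and g: "proper_coloring K g (restr A (S - z))"
    and "A \<subseteq> Pow S"
  shows "proper_coloring (2 * K) (\<lambda>x. if x \<in> z then f x else K + g x) A"
  unfolding proper_coloring_def
proof (intro conjI allI ballI)
  fix x
  have "f x < K" and "g x < K" using f g by (simp_all add: proper_coloring_def)
  then show "(if x \<in> z then f x else K + g x) < 2 * K" by simp
next
  fix a assume "a \<in> A"
  consider "a \<subseteq> z" | "a \<subseteq> S - z" | x y where "x \<in> a" "x \<notin> z" "y \<in> a" "y \<in> z"
    using \<open>a \<in> A\<close> assms(3) by blast
  then show "\<exists>x\<in>a. \<exists>y\<in>a. (if x \<in> z then f x else K + g x) \<noteq> (if y \<in> z then f y else K + g y)"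
  proof cases
    case 1
    then obtain x y where "x \<in> a" "y \<in> a" "f x \<noteq> f y"
      using f \<open>a \<in> A\<close> by (auto simp: proper_coloring_def restr_def)
    then show ?thesis using 1 by auto
  next
    case 2
    then obtain x y where "x \<in> a" "y \<in> a" "g x \<noteq> g y"
      using g \<open>a \<in> A\<close> by (auto simp: proper_coloring_def restr_def)
    then show ?thesis using 2 by auto
  next
    case 3
    then have "f y < K + g x" using f by (auto simp: proper_coloring_def trans_less_add1)
    then show ?thesis using 3 by (intro bexI[of _ x] bexI[of _ y]) auto
  qed
qed

lemma proper_coloring_imp_not_norm3_ge:
  "proper_coloring (2 ^ j) f A \<Longrightarrow> \<not> norm3_ge N A (Suc j)"
proof (induction j arbitrary: A f)
  case 0
  then have "A = {}" by (fastforce simp: proper_coloring_def)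
  then show ?case by simp
next
  case (Suc j)
  define z where "z = {x \<in> {..<N}. f x < 2 ^ j}"
  have "proper_coloring (2 * 2 ^ j) f A"
    using Suc.prems by simp
  then have "proper_coloring (2 ^ j) (\<lambda>x. if f x < 2 ^ j then f x else 0) (restr A z)"
    and "proper_coloring (2 ^ j) (\<lambda>x. f x - 2 ^ j) (restr A ({..<N} - z))"
    by (auto intro!: proper_coloring_restr_low proper_coloring_restr_high simp: z_def)
  then have "\<not> norm3_ge N (restr A z) (Suc j)" and "\<not> norm3_ge N (restr A ({..<N} - z)) (Suc j)"
    by (auto dest: Suc.IH)
  moreover have "z \<subseteq> {..<N}" by (auto simp: z_def)
  ultimately show ?case by (simp only: norm3_ge.simps) blast
qed

lemma not_norm3_ge_imp_proper_coloring:
  "A \<subseteq> Pow {..<N} \<Longrightarrow> \<not> norm3_ge N A (Suc j) \<Longrightarrow> \<exists>f. proper_coloring (2 ^ j) f A"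
proof (induction j arbitrary: A)
  case 0
  then show ?case by (auto simp: proper_coloring_def)
next
  case (Suc j)
  then obtain z where "z \<subseteq> {..<N}" and "\<not> norm3_ge N (restr A z) (Suc j)"
    and "\<not> norm3_ge N (restr A ({..<N} - z)) (Suc j)"
    by (simp only: norm3_ge.simps) blast
  moreover have "restr A z \<subseteq> Pow {..<N}" and "restr A ({..<N} - z) \<subseteq> Pow {..<N}"
    using Suc.prems by (auto simp: restr_def)
  ultimately obtain f g where "proper_coloring (2 ^ j) f (restr A z)"
    and "proper_coloring (2 ^ j) g (restr A ({..<N} - z))"
    using Suc.IH by meson
  from proper_coloring_join[OF this Suc.prems(1)] show ?case
    by auto
qed

lemma card_UN_Pow_disjoint:
  assumes "finite I" and "I \<noteq> {}" and fin: "\<And>i. i \<in> I \<Longrightarrow> finite (V i)"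
    and disj: "\<And>i j. i \<in> I \<Longrightarrow> j \<in> I \<Longrightarrow> i \<noteq> j \<Longrightarrow> V i \<inter> V j = {}"
  shows "real (card (\<Union>i\<in>I. Pow (V i))) = 1 - real (card I) + (\<Sum>i\<in>I. 2 ^ card (V i))"
proof -
  let ?P = "\<lambda>i. Pow (V i) - {{}}"
  have "(\<Union>i\<in>I. Pow (V i)) = insert {} (\<Union>i\<in>I. ?P i)"
    using assms(2) by auto
  moreover have "{} \<notin> (\<Union>i\<in>I. ?P i)"
    by blast
  moreover have "finite (\<Union>i\<in>I. ?P i)"
    using assms(1) fin by blast
  ultimately have "card (\<Union>i\<in>I. Pow (V i)) = 1 + card (\<Union>i\<in>I. ?P i)"
    by (metis card_insert_disjoint plus_1_eq_Suc)
  also have "card (\<Union>i\<in>I. ?P i) = (\<Sum>i\<in>I. card (?P i))"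
  proof (rule card_UN_disjoint)
    show "\<forall>i\<in>I. \<forall>j\<in>I. i \<noteq> j \<longrightarrow> ?P i \<inter> ?P j = {}"
      using disj by blast
  qed (use assms(1) fin in auto)
  finally have "real (card (\<Union>i\<in>I. Pow (V i))) = 1 + (\<Sum>i\<in>I. 2 ^ card (V i) - 1)"
    using fin by (simp add: card_Pow of_nat_diff)
  then show ?thesis
    by (simp add: sum_subtractf)
qed

lemma card_mult_powr_mean_le_sum_powr:
  fixes b :: real and x :: "'a \<Rightarrow> real"
  assumes "b > 0"
  shows "real (card I) * b powr ((\<Sum>i\<in>I. x i) / real (card I)) \<le> (\<Sum>i\<in>I. b powr x i)"
proof (cases "card I = 0")
  case False
  define c where "c = (\<Sum>i\<in>I. x i) / card I"
  have tangent: "b powr c * (1 + ln b * (t - c)) \<le> b powr t" for t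
  proof -
    have "b powr t = b powr c * exp (ln b * (t - c))"
      using assms by (simp add: powr_def flip: exp_add) (simp add: algebra_simps)
    then show ?thesis
      using exp_ge_add_one_self[of "ln b * (t - c)"] by (simp add: mult_left_mono)
  qed
  have "real (card I) * b powr c
      = b powr c * (card I + ln b * ((\<Sum>i\<in>I. x i) - card I * c))"
    using False by (simp add: c_def)
  also have "\<dots> = (\<Sum>i\<in>I. b powr c * (1 + ln b * (x i - c)))"
    by (simp add: sum_distrib_left[symmetric] sum.distrib sum_subtractf)
  also have "\<dots> \<le> (\<Sum>i\<in>I. b powr x i)"
    by (intro sum_mono tangent)
  finally show ?thesis
    by (simp add: c_def)
qed (simp add: sum_nonneg)

lemma card_le_of_proper_coloring:
  assumes A: "A \<subseteq> Pow {..<N}" and f: "proper_coloring K f A" and "K > 0"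
  shows "real (card A) \<le> 2 ^ N - K * 2 powr (N / K) + K - 1"
proof -
  define V where "V i = {x \<in> {..<N}. f x = i}" for i
  let ?U = "\<Union>i<K. Pow (V i)"
  have "{..<N} = (\<Union>i<K. V i)"
    using f by (auto simp: proper_coloring_def V_def)
  then have "N = card (\<Union>i<K. V i)"
    by (metis card_lessThan)
  also have "\<dots> = (\<Sum>i<K. card (V i))"
    by (rule card_UN_disjoint) (auto simp: V_def)
  finally have N: "N = (\<Sum>i<K. card (V i))" .
  have "a \<notin> Pow (V i)" if "a \<in> A" for a i
  proof
    assume "a \<in> Pow (V i)"
    then have "\<forall>x\<in>a. f x = i" by (auto simp: V_def)
    then show False using f that by (metis proper_coloring_def)
  qed
  then have "A \<inter> ?U = {}"
    by blast
  moreover have "A \<union> ?U \<subseteq> Pow {..<N}"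
    using A by (auto simp: V_def)
  ultimately have "card A + card ?U \<le> 2 ^ N"
    using card_mono[of "Pow {..<N}" "A \<union> ?U"] finite_subset[of _ "Pow {..<N}"]
    by (simp add: card_Pow card_Un_disjoint)
  then have "real (card A) + real (card ?U) \<le> 2 ^ N"
    by (metis of_nat_add of_nat_le_iff of_nat_numeral of_nat_power)
  moreover have "real (card ?U) = 1 - real K + (\<Sum>i<K. 2 ^ card (V i))"
    using \<open>K > 0\<close> by (subst card_UN_Pow_disjoint) (auto simp: V_def)
  moreover have "real K * 2 powr (real N / real K) \<le> (\<Sum>i<K. 2 ^ card (V i))"
    using card_mult_powr_mean_le_sum_powr[where b = 2 and x = "\<lambda>i. real (card (V i))" and I = "{..<K}"]
    by (simp add: N powr_realpow)
  ultimately show ?thesis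
    by simp
qed

lemma norm3_ge_imp_le:
  assumes "A \<subseteq> {a. a \<subseteq> {..<N} \<and> card a \<ge> 2}" and "norm3_ge N A m"
  shows "m \<le> N"
proof (rule ccontr)
  assume "\<not> m \<le> N"
  then have "norm3_ge N A (Suc N)"
    using assms(2) norm3_ge_mono by simp
  moreover have "proper_coloring (2 ^ N) (\<lambda>x. x mod 2 ^ N) A"
    unfolding proper_coloring_def
  proof (intro conjI allI ballI)
    fix a assume "a \<in> A"
    then have "a \<subseteq> {..<N}" and "\<not> card a \<le> 1"
      using assms(1) by auto
    then obtain x y where "x \<in> a" "y \<in> a" "x \<noteq> y"
      using card_le_Suc0_iff_eq[OF finite_subset] by (metis One_nat_def finite_lessThan)
    moreover have "x < 2 ^ N" and "y < 2 ^ N"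
      using \<open>x \<in> a\<close> \<open>y \<in> a\<close> \<open>a \<subseteq> {..<N}\<close> by (auto intro: less_trans[OF _ less_exp])
    ultimately show "\<exists>x\<in>a. \<exists>y\<in>a. x mod 2 ^ N \<noteq> y mod 2 ^ N"
      by (metis mod_less)
  qed simp
  ultimately show False
    using proper_coloring_imp_not_norm3_ge by blast
qed

lemma not_norm3_ge_Suc_norm3:
  assumes "\<And>m. norm3_ge N A m \<Longrightarrow> m \<le> B"
  shows "\<not> norm3_ge N A (Suc (norm3 N A))"
proof
  assume "norm3_ge N A (Suc (norm3 N A))"
  then have "Suc (norm3 N A) \<le> norm3 N A"
    unfolding norm3_def using assms by (rule Greatest_le_nat)
  then show False by simp
qed

theorem theorem5p37:
  fixes N k :: nat and A :: "nat set set"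
  assumes "A \<subseteq> {a. a \<subseteq> {..<N} \<and> card a \<ge> 2}"
    and "norm3 N A = k"
  shows "real (card A) \<le> 2 ^ N - 2 ^ k * 2 powr (real N / 2 ^ k) + 2 ^ k - 1"
proof -
  have A: "A \<subseteq> Pow {..<N}"
    using assms(1) by auto
  have "\<not> norm3_ge N A (Suc (norm3 N A))"
    by (rule not_norm3_ge_Suc_norm3) (rule norm3_ge_imp_le[OF assms(1)])
  then obtain f where "proper_coloring (2 ^ k) f A"
    using not_norm3_ge_imp_proper_coloring[OF A] assms(2) by blast
  from card_le_of_proper_coloring[OF A this] show ?thesis
    unfolding of_nat_power of_nat_numeral by simp
qed

end
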